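(* Let $G=(V,E)$ be a connected graph and $d\ge 1$ an integer, and let $G^{(d)}$ be the graph obtained from $G$ by replacing each edge $xy\in E$ by a path of length $d$ connecting $x$ and $y$ (i.e., subdividing each edge by $d-1$ new vertices). Then $$\textrm{cn}(G) \le \textrm{cn}(G^{(d)}) \le \textrm{cn}(G)+1.$$
   Context: Game of cops and robber on a finite graph: $k$ cops are placed on vertices (possibly several on one vertex), then the robber is placed; players alternate starting with the cops; in a move each cop and, on his turn, the robber stays or moves to an adjacent vertex. The robber is captured when a cop occupies his vertex. $\textrm{cn}(G)$ is the least $k$ such that $k$ cops have a strategy guaranteeing capture. *)

theory Defs
  imports Main
begin

definition graph :: "'v set \<Rightarrow> ('v \<Rightarrow> 'v \<Rightarrow> bool) \<Rightarrow> bool" where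
  "graph V E \<longleftrightarrow> finite V \<and> (\<forall>x y. E x y \<longrightarrow> x \<in> V \<and> y \<in> V \<and> x \<noteq> y \<and> E y x)"

definition connected_graph :: "'v set \<Rightarrow> ('v \<Rightarrow> 'v \<Rightarrow> bool) \<Rightarrow> bool" where
  "connected_graph V E \<longleftrightarrow> V \<noteq> {} \<and> (\<forall>x\<in>V. \<forall>y\<in>V. E\<^sup>*\<^sup>* x y)"

definition cop_move :: "('v \<Rightarrow> 'v \<Rightarrow> bool) \<Rightarrow> 'v list \<Rightarrow> 'v list \<Rightarrow> bool" where
  "cop_move E cs cs' \<longleftrightarrow> list_all2 (\<lambda>a b. a = b \<or> E a b) cs cs'"

definition robber_move :: "('v \<Rightarrow> 'v \<Rightarrow> bool) \<Rightarrow> 'v \<Rightarrow> 'v \<Rightarrow> bool" where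
  "robber_move E r r' \<longleftrightarrow> r' = r \<or> E r r'"

text \<open>cops_win E cs r: in the position with cops at cs, robber at r and the cops
  to move, the cops have a strategy guaranteeing capture (attractor / backward induction).\<close>
inductive cops_win :: "('v \<Rightarrow> 'v \<Rightarrow> bool) \<Rightarrow> 'v list \<Rightarrow> 'v \<Rightarrow> bool" for E where
  caught: "r \<in> set cs \<Longrightarrow> cops_win E cs r"
| step: "cop_move E cs cs' \<Longrightarrow>
     (r \<in> set cs' \<or> (\<forall>r'. robber_move E r r' \<longrightarrow> cops_win E cs' r')) \<Longrightarrow> cops_win E cs r"

definition k_cops_win :: "'v set \<Rightarrow> ('v \<Rightarrow> 'v \<Rightarrow> bool) \<Rightarrow> nat \<Rightarrow> bool" where
  "k_cops_win V E k \<longleftrightarrow> (\<exists>cs. length cs = k \<and> set cs \<subseteq> V \<and> (\<forall>r\<in>V. cops_win E cs r))"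

definition cop_number :: "'v set \<Rightarrow> ('v \<Rightarrow> 'v \<Rightarrow> bool) \<Rightarrow> nat" where
  "cop_number V E = (LEAST k. k_cops_win V E k)"

text \<open>Subdivision G^(d): original vertices Inl x; the edge {x,y} with x < y gets
  internal vertices Inr (x,y,i), 0 < i < d, where Inr(x,y,i) is at distance i from x.\<close>
definition sub_pt :: "nat \<Rightarrow> 'a::linorder \<Rightarrow> 'a \<Rightarrow> nat \<Rightarrow> 'a + ('a \<times> 'a \<times> nat)" where
  "sub_pt d x y i = (if i = 0 then Inl x else if i = d then Inl y
                     else if x < y then Inr (x, y, i) else Inr (y, x, d - i))"

definition subdiv_V :: "'a::linorder set \<Rightarrow> ('a \<Rightarrow> 'a \<Rightarrow> bool) \<Rightarrow> nat \<Rightarrow> ('a + ('a \<times> 'a \<times> nat)) set" where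
  "subdiv_V V E d = Inl ` V \<union> {Inr (x, y, i) | x y i. E x y \<and> x < y \<and> 0 < i \<and> i < d}"

definition subdiv_E :: "('a::linorder \<Rightarrow> 'a \<Rightarrow> bool) \<Rightarrow> nat
     \<Rightarrow> ('a + ('a \<times> 'a \<times> nat)) \<Rightarrow> ('a + ('a \<times> 'a \<times> nat)) \<Rightarrow> bool" where
  "subdiv_E E d u v \<longleftrightarrow> (\<exists>x y i. E x y \<and> i < d \<and> {u, v} = {sub_pt d x y i, sub_pt d x y (Suc i)})"

end

theory Submission
  imports Defs
begin

text \<open>
  Lower bound: a winning strategy of the cops on the subdivision is simulated on \<open>G\<close>. Every
  cop of the subdivision is shadowed by a cop of \<open>G\<close> whose star (the vertex together with the
  half-open edges leaving it) contains him. One round on \<open>G\<close> corresponds to the \<open>d\<close> rounds in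
  which the robber of the subdivision traverses an edge; during these rounds a cop of the
  subdivision cannot leave the stars of his shadow and its neighbours, so one move on \<open>G\<close>
  restores the invariant.

  Upper bound: \<open>k\<close> cops of the subdivision imitate a winning strategy of \<open>G\<close>, spreading each
  of its moves over \<open>d\<close> rounds, while one extra cop walks towards the robber along a
  non-backtracking walk. If the robber stands still or turns back, this walk gets shorter; so a robber avoiding
  the chaser forever would have to traverse whole edges, i.e. play the game on \<open>G\<close>, which the
  imitating cops win.
\<close>

type_synonym 'a subdiv_vertex = "'a + ('a \<times> 'a \<times> nat)"

lemma sub_pt_0 [simp]: "sub_pt d x y 0 = Inl x"
  by (simp add: sub_pt_def)

lemma sub_pt_d [simp]: "d \<noteq> 0 \<Longrightarrow> sub_pt d x y d = Inl y"
  by (simp add: sub_pt_def)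

lemma sub_pt_swap: "x \<noteq> y \<Longrightarrow> i \<le> d \<Longrightarrow> 0 < d \<Longrightarrow> sub_pt d x y i = sub_pt d y x (d - i)"
  by (auto simp: sub_pt_def)

lemma sub_pt_interior:
  "0 < i \<Longrightarrow> i < d \<Longrightarrow> sub_pt d x y i = (if x < y then Inr (x, y, i) else Inr (y, x, d - i))"
  by (auto simp: sub_pt_def)

lemma sub_pt_eq_Inl_iff:
  "a \<noteq> b \<Longrightarrow> s \<le> d \<Longrightarrow> 0 < d \<Longrightarrow> sub_pt d a b s = Inl z \<longleftrightarrow> (s = 0 \<and> z = a) \<or> (s = d \<and> z = b)"
  by (auto simp: sub_pt_def)

lemma sub_pt_eq_interior_iff:
  "a \<noteq> b \<Longrightarrow> y \<noteq> x \<Longrightarrow> 0 < s \<Longrightarrow> s < d \<Longrightarrow> 0 < m \<Longrightarrow> m < d \<Longrightarrow>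
   sub_pt d a b s = sub_pt d y x m \<longleftrightarrow> (a = y \<and> b = x \<and> s = m) \<or> (a = x \<and> b = y \<and> s = d - m)"
  by (auto simp: sub_pt_def split: if_splits)

lemma sub_pt_interior_not_Inl: "0 < s \<Longrightarrow> s < d \<Longrightarrow> sub_pt d a b s \<noteq> Inl z"
  by (simp add: sub_pt_interior)

section \<open>Non-backtracking walks\<close>

fun nb_walk :: "('b \<Rightarrow> 'b \<Rightarrow> bool) \<Rightarrow> 'b list \<Rightarrow> bool" where
  "nb_walk R [] = True"
| "nb_walk R [a] = True"
| "nb_walk R (a # b # r) = (R a b \<and> nb_walk R (b # r) \<and> (case r of [] \<Rightarrow> True | c # _ \<Rightarrow> c \<noteq> a))"

lemma nb_walk_tl: "nb_walk R t \<Longrightarrow> nb_walk R (tl t)"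
  by (induction R t rule: nb_walk.induct) auto

lemma nb_walk_butlast: "nb_walk R t \<Longrightarrow> nb_walk R (butlast t)"
proof (induction R t rule: nb_walk.induct)
  case (3 R a b r)
  then show ?case by (cases r) (auto split: list.splits)
qed auto

lemma nb_walk_snoc:
  "nb_walk R t \<Longrightarrow> t \<noteq> [] \<Longrightarrow> R (last t) x \<Longrightarrow> (2 \<le> length t \<Longrightarrow> x \<noteq> last (butlast t)) \<Longrightarrow>
   nb_walk R (t @ [x])"
proof (induction R t rule: nb_walk.induct)
  case (3 R a b r)
  then show ?case by (cases r) (auto split: list.splits)
qed auto

lemma nb_walk_first_edge: "nb_walk R t \<Longrightarrow> 2 \<le> length t \<Longrightarrow> R (hd t) (hd (tl t))"
  by (cases "(R, t)" rule: nb_walk.cases) auto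

lemma nb_walk_last_edge: "nb_walk R t \<Longrightarrow> 2 \<le> length t \<Longrightarrow> R (last (butlast t)) (last t)"
proof (induction R t rule: nb_walk.induct)
  case (3 R a b r)
  then show ?case by (cases r) auto
qed auto

text \<open>Removing a backtracking step from the end of a walk turns a walk into a non-backtracking one.\<close>

lemma rtranclp_imp_nb_walk:
  "R\<^sup>*\<^sup>* u v \<Longrightarrow> \<exists>t. nb_walk R t \<and> t \<noteq> [] \<and> hd t = u \<and> last t = v"
proof (induction rule: rtranclp_induct)
  case base
  then show ?case by (intro exI[of _ "[u]"]) simp
next
  case (step y z)
  then obtain t where t: "nb_walk R t" "t \<noteq> []" "hd t = u" "last t = y"
    by blast
  show ?case
  proof (cases "2 \<le> length t \<and> z = last (butlast t)")
    case True
    have "butlast t \<noteq> []" "hd (butlast t) = hd t"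
      using True by (cases t; auto)+
    then show ?thesis
      using True t nb_walk_butlast by (intro exI[of _ "butlast t"]) auto
  next
    case False
    then show ?thesis
      using t step(2) nb_walk_snoc[OF t(1,2), of z] by (intro exI[of _ "t @ [z]"]) auto
  qed
qed

lemma nb_walk_continue_cases:
  assumes t: "nb_walk R t" "3 \<le> length t" and r': "r' = last t \<or> R (last t) r'"
  obtains (shorter) t' where "nb_walk R t'" "t' \<noteq> []" "hd t' = hd (tl t)" "last t' = r'"
    "length t' < length t"
  | (forward) "R (last t) r'" "r' \<noteq> last (butlast t)" "nb_walk R (tl t @ [r'])"
proof -
  obtain a b r where abr: "t = a # b # r"
    using t(2) by (cases t; cases "tl t"; auto)
  with t(2) have r: "r \<noteq> []"
    by auto
  have ntl: "nb_walk R (b # r)"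
    using nb_walk_tl[OF t(1)] abr by simp
  consider "r' = last t" | "r' \<noteq> last t" "r' = last (butlast t)"
    | "r' \<noteq> last t" "r' \<noteq> last (butlast t)"
    by blast
  then show thesis
  proof cases
    case 1
    then show thesis
      using ntl abr r by (intro shorter[of "b # r"]) auto
  next
    case 2
    have "nb_walk R (b # butlast r)"
      using nb_walk_butlast[OF ntl] r by simp
    then show thesis
      using 2 abr r by (intro shorter[of "b # butlast r"]) auto
  next
    case 3
    have "nb_walk R ((b # r) @ [r'])"
      by (rule nb_walk_snoc[OF ntl]) (use 3 r' abr in auto)
    then show thesis
      using 3 r' abr by (intro forward) auto
  qed
qed

lemma tl_snoc_simps:
  assumes "2 \<le> length t"
  shows "hd (tl t @ [r]) = hd (tl t)" "last (butlast (tl t @ [r])) = last t"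
    "last (tl t @ [r]) = r" "length (tl t @ [r]) = length t" "2 \<le> length (tl t @ [r])"
  using assms by (cases t; cases "tl t"; auto)+

section \<open>Cops and robber\<close>

lemma cop_move_refl: "cop_move E c c"
  by (simp add: cop_move_def list_all2_refl)

lemma cop_move_length: "cop_move E c c' \<Longrightarrow> length c = length c'"
  by (simp add: cop_move_def list_all2_lengthD)

lemma cop_move_in_V:
  assumes "graph V E"
  shows "cop_move E c c' \<Longrightarrow> set c \<subseteq> V \<Longrightarrow> set c' \<subseteq> V"
  unfolding cop_move_def
proof (induction c c' rule: list_all2_induct)
qed (use assms in \<open>auto simp: graph_def\<close>)

lemma list_all2_set2_ex: "list_all2 Q xs ys \<Longrightarrow> y \<in> set ys \<Longrightarrow> \<exists>x\<in>set xs. Q x y"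
  by (induction xs ys rule: list_all2_induct) auto

lemma list_all2_choice: "\<forall>y\<in>set ys. \<exists>x. Q x y \<Longrightarrow> \<exists>xs. list_all2 Q xs ys"
proof (induction ys)
  case (Cons y ys)
  then obtain xs x where "list_all2 Q xs ys" "Q x y"
    by auto
  then show ?case by (intro exI[of _ "x # xs"]) auto
qed simp

lemma cops_win_adjacent:
  assumes a: "a \<in> set c" and ax: "a = x \<or> E a x"
  shows "cops_win E c x"
proof -
  obtain i where i: "i < length c" "c ! i = a"
    using a by (meson in_set_conv_nth)
  have "cop_move E c (c[i := x])"
    unfolding cop_move_def list_all2_conv_all_nth
    using i ax by (auto simp: nth_list_update)
  moreover have "x \<in> set (c[i := x])"
    using i by (simp add: set_update_memI)
  ultimately show ?thesis
    using cops_win.step[of E c "c[i := x]" x] by blast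
qed

text \<open>The first cop moves one step along the walk \<open>t\<close> towards the robber.\<close>

lemma cops_win_chase:
  assumes t: "nb_walk E t" "2 \<le> length t" and F: "cop_move E F F'"
    and shorter: "\<And>t'. nb_walk E t' \<Longrightarrow> t' \<noteq> [] \<Longrightarrow> length t' < length t \<Longrightarrow> hd t' = hd (tl t) \<Longrightarrow>
      cops_win E (hd t' # F') (last t')"
    and forward: "\<And>r'. E (last t) r' \<Longrightarrow> r' \<noteq> last (butlast t) \<Longrightarrow> last t \<notin> set F' \<Longrightarrow>
      nb_walk E (tl t @ [r']) \<Longrightarrow> cops_win E (hd (tl t) # F') r'"
  shows "cops_win E (hd t # F) (last t)"
proof (rule cops_win.step)
  show "cop_move E (hd t # F) (hd (tl t) # F')"
    using nb_walk_first_edge[OF t] F by (simp add: cop_move_def)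
  show "last t \<in> set (hd (tl t) # F') \<or>
    (\<forall>r'. robber_move E (last t) r' \<longrightarrow> cops_win E (hd (tl t) # F') r')"
  proof (cases "length t = 2 \<or> last t \<in> set F'")
    case True
    moreover have "length t = 2 \<Longrightarrow> hd (tl t) = last t"
      by (cases t; cases "tl t"; auto)
    ultimately show ?thesis by auto
  next
    case False
    then have t3: "3 \<le> length t" and notF: "last t \<notin> set F'"
      using t(2) by auto
    show ?thesis
    proof (intro disjI2 allI impI)
      fix r' assume "robber_move E (last t) r'"
      then have "r' = last t \<or> E (last t) r'"
        by (auto simp: robber_move_def)
      then show "cops_win E (hd (tl t) # F') r'"
        by (cases rule: nb_walk_continue_cases[OF t(1) t3])
          (use shorter forward notF in auto)
    qed
  qed
qed

lemma rtranclp_list_all2: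
  assumes "reflp S"
  shows "list_all2 S\<^sup>*\<^sup>* xs ys \<Longrightarrow> (list_all2 S)\<^sup>*\<^sup>* xs ys"
proof (induction xs ys rule: list_all2_induct)
  case (Cons a xs b ys)
  have refl: "list_all2 S zs zs" for zs
    using assms by (simp add: list_all2_refl reflpD)
  have "(list_all2 S)\<^sup>*\<^sup>* (a # xs) (b # xs)"
    using Cons(1)
  proof (induction rule: rtranclp_induct)
    case (step y z)
    then show ?case
      using refl by (simp add: rtranclp.rtrancl_into_rtrancl)
  qed simp
  also have "(list_all2 S)\<^sup>*\<^sup>* (b # xs) (b # ys)"
    using Cons(3)
  proof (induction rule: rtranclp_induct)
    case (step y z)
    then show ?case
      using assms by (simp add: rtranclp.rtrancl_into_rtrancl reflpD)
  qed simp
  finally show ?case .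
qed simp

text \<open>On a connected graph the cops can first gather in a winning placement, so they win from
  every placement.\<close>

lemma k_cops_win_imp_cops_win:
  assumes G: "graph V E" and conn: "connected_graph V E" and win: "k_cops_win V E k"
    and c: "length c = k" "set c \<subseteq> V" and x: "x \<in> V"
  shows "cops_win E c x"
proof -
  obtain cs where cs: "length cs = k" "set cs \<subseteq> V" "\<forall>r\<in>V. cops_win E cs r"
    using win unfolding k_cops_win_def by blast
  let ?S = "\<lambda>a b. a = b \<or> E a b"
  have "list_all2 ?S\<^sup>*\<^sup>* c cs"
    unfolding list_all2_conv_all_nth
  proof (intro conjI allI impI)
    fix i assume "i < length c"
    then have "c ! i \<in> V" "cs ! i \<in> V"
      using c cs nth_mem by (metis subsetD)+
    then have "E\<^sup>*\<^sup>* (c ! i) (cs ! i)"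
      using conn unfolding connected_graph_def by blast
    then show "?S\<^sup>*\<^sup>* (c ! i) (cs ! i)"
      by (rule rtranclp_mono[THEN predicate2D, rotated]) auto
  qed (use c cs in simp)
  then have "(cop_move E)\<^sup>*\<^sup>* c cs"
    using rtranclp_list_all2[of ?S] unfolding cop_move_def by (simp add: reflp_def)
  then have "\<forall>r\<in>V. cops_win E c r"
  proof (induction rule: converse_rtranclp_induct)
    case (step c c')
    show ?case
    proof
      fix r assume "r \<in> V"
      then have "\<forall>r'. robber_move E r r' \<longrightarrow> r' \<in> V"
        using G by (auto simp: robber_move_def graph_def)
      then show "cops_win E c r"
        using cops_win.step[OF step(1)] step(3) by blast
    qed
  qed (use cs in blast)
  then show ?thesis
    using x by blast
qed

lemma k_cops_win_exists: "finite V \<Longrightarrow> \<exists>k. k_cops_win V E k"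
proof -
  assume "finite V"
  then obtain xs where "set xs = V"
    using finite_list by blast
  then have "k_cops_win V E (length xs)"
    unfolding k_cops_win_def by (intro exI[of _ xs]) (auto intro: cops_win.caught)
  then show ?thesis by blast
qed

lemma k_cops_win_cop_number: "k_cops_win V E k \<Longrightarrow> k_cops_win V E (cop_number V E)"
  unfolding cop_number_def by (rule LeastI)

lemma cop_number_le: "k_cops_win V E k \<Longrightarrow> cop_number V E \<le> k"
  unfolding cop_number_def by (rule Least_le)

section \<open>The subdivided graph\<close>

locale subdivision =
  fixes V :: "'a::linorder set" and E :: "'a \<Rightarrow> 'a \<Rightarrow> bool" and d :: nat
  assumes graph: "graph V E" and d_pos: "1 \<le> d"
begin

abbreviation E' :: "'a subdiv_vertex \<Rightarrow> 'a subdiv_vertex \<Rightarrow> bool" where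
  "E' \<equiv> subdiv_E E d"

lemma E_sym: "E x y \<Longrightarrow> E y x"
  using graph by (auto simp: graph_def)

lemma E_neq: "E x y \<Longrightarrow> x \<noteq> y"
  using graph by (auto simp: graph_def)

lemma E_in_V: "E x y \<Longrightarrow> x \<in> V \<and> y \<in> V"
  using graph by (auto simp: graph_def)

lemma subdiv_E_sub_pt: "E a b \<Longrightarrow> s < d \<Longrightarrow> E' (sub_pt d a b s) (sub_pt d a b (Suc s))"
  unfolding subdiv_E_def by blast

lemma subdiv_E_cases:
  assumes "E' u w"
  obtains x y i where "E x y" "i < d" "u = sub_pt d x y i" "w = sub_pt d x y (Suc i)"
proof -
  obtain x y i where xy: "E x y" "i < d" "{u, w} = {sub_pt d x y i, sub_pt d x y (Suc i)}"
    using assms unfolding subdiv_E_def by blast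
  show ?thesis
  proof (cases "u = sub_pt d x y i \<and> w = sub_pt d x y (Suc i)")
    case True
    then show ?thesis using that xy by blast
  next
    case False
    then have uw: "u = sub_pt d x y (Suc i)" "w = sub_pt d x y i"
      using xy(3) by (auto simp: doubleton_eq_iff)
    have ne: "x \<noteq> y"
      using E_neq xy(1) by blast
    have "u = sub_pt d y x (d - Suc i)"
      using uw sub_pt_swap[OF ne, of "Suc i" d] xy(2) by simp
    moreover have "w = sub_pt d y x (Suc (d - Suc i))"
      using uw sub_pt_swap[OF ne, of i d] xy(2) by (simp add: Suc_diff_Suc)
    ultimately show ?thesis
      using that[of y x "d - Suc i"] E_sym[OF xy(1)] xy(2) by simp
  qed
qed

lemma subdiv_E_interior_neighbours:
  assumes ab: "E a b" and s: "0 < s" "s < d" and e: "E' (sub_pt d a b s) w"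
  shows "w = sub_pt d a b (s - 1) \<or> w = sub_pt d a b (Suc s)"
proof -
  obtain x y i where xy: "E x y" "i < d" "sub_pt d a b s = sub_pt d x y i" "w = sub_pt d x y (Suc i)"
    using e by (rule subdiv_E_cases)
  have "i \<noteq> 0"
    using xy(3) sub_pt_interior_not_Inl[OF s] by (metis sub_pt_0)
  then have "(a = x \<and> b = y \<and> s = i) \<or> (a = y \<and> b = x \<and> s = d - i)"
    using sub_pt_eq_interior_iff[of a b x y s d i] xy E_neq[OF ab] E_neq[OF xy(1)] s by auto
  then show ?thesis
  proof
    assume h: "a = y \<and> b = x \<and> s = d - i"
    have "w = sub_pt d y x (d - Suc i)"
      using xy(4) sub_pt_swap[of x y "Suc i" d] E_neq[OF xy(1)] xy(2) by simp
    moreover have "d - Suc i = s - 1"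
      using h by linarith
    ultimately show ?thesis
      using h by metis
  qed (use xy in simp)
qed

lemma subdiv_E_Inl_neighbours:
  assumes "E' (Inl a) w"
  obtains z where "E a z" "w = sub_pt d a z 1"
proof -
  obtain x y i where xy: "E x y" "i < d" "Inl a = sub_pt d x y i" "w = sub_pt d x y (Suc i)"
    using assms by (rule subdiv_E_cases)
  then have "i = 0 \<and> a = x"
    using sub_pt_eq_Inl_iff[of x y i d a] E_neq[OF xy(1)] by auto
  then show ?thesis
    using that xy by auto
qed

lemma rtranclp_subdiv_E_sub_pt: "E a b \<Longrightarrow> s \<le> d \<Longrightarrow> E'\<^sup>*\<^sup>* (Inl a) (sub_pt d a b s)"
proof (induction s)
  case (Suc s)
  then show ?case
    using subdiv_E_sub_pt[of a b s] by (simp add: rtranclp.rtrancl_into_rtrancl)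
qed simp

lemma rtranclp_subdiv_E_Inl: "E\<^sup>*\<^sup>* x y \<Longrightarrow> E'\<^sup>*\<^sup>* (Inl x) (Inl y)"
proof (induction rule: rtranclp_induct)
  case (step y z)
  then show ?case
    using rtranclp_subdiv_E_sub_pt[of y z d] d_pos by simp
qed simp

lemma subdiv_V_cases:
  assumes "P \<in> subdiv_V V E d"
  obtains a where "a \<in> V" "P = Inl a"
  | a b i where "E a b" "0 < i" "i < d" "P = sub_pt d a b i"
  using assms unfolding subdiv_V_def by (auto simp: sub_pt_interior)

lemma subdiv_reachable:
  assumes conn: "connected_graph V E" and v: "v \<in> V" and P: "P \<in> subdiv_V V E d"
  shows "E'\<^sup>*\<^sup>* (Inl v) P"
  using P
proof (cases rule: subdiv_V_cases)
  case (1 a)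
  then show ?thesis
    using rtranclp_subdiv_E_Inl conn v unfolding connected_graph_def by blast
next
  case (2 a b i)
  then have "E\<^sup>*\<^sup>* v a"
    using conn v E_in_V unfolding connected_graph_def by blast
  then show ?thesis
    using 2 rtranclp_subdiv_E_Inl rtranclp_subdiv_E_sub_pt[of a b i]
    by (meson less_imp_le rtranclp_trans)
qed

section \<open>Lower bound\<close>

text \<open>The stars of the vertices of \<open>G\<close> partition the subdivision. A cop of the subdivision
  starting in the star of \<open>c\<close> is still \<open>near_star m c\<close> after \<open>m \<le> d\<close> moves.\<close>

definition in_star :: "'a \<Rightarrow> 'a subdiv_vertex \<Rightarrow> bool" where
  "in_star c P \<longleftrightarrow> P = Inl c \<or> (\<exists>b s. E c b \<and> s < d \<and> P = sub_pt d c b s)"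

definition near_star :: "nat \<Rightarrow> 'a \<Rightarrow> 'a subdiv_vertex \<Rightarrow> bool" where
  "near_star m c P \<longleftrightarrow> in_star c P \<or> (\<exists>a b s. E c a \<and> E a b \<and> s < m \<and> P = sub_pt d a b s)"

lemma sub_pt_eq_Inl_start: "E a b \<Longrightarrow> s < d \<Longrightarrow> sub_pt d a b s = Inl x \<Longrightarrow> x = a"
  using sub_pt_eq_Inl_iff[of a b s d x] E_neq by auto

lemma in_star_Inl: "in_star c (Inl x) \<Longrightarrow> c = x"
  unfolding in_star_def using sub_pt_eq_Inl_start by (metis sum.inject(1))

lemma in_star_imp_near_star: "in_star c P \<Longrightarrow> near_star m c P"
  unfolding near_star_def by blast

lemma near_star_Inl: "near_star m c (Inl x) \<Longrightarrow> m < d \<Longrightarrow> c = x \<or> E c x"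
  unfolding near_star_def using in_star_Inl sub_pt_eq_Inl_start
  by (metis order.strict_trans)

lemma near_star_sub_pt:
  assumes J: "near_star m c (sub_pt d y x s)" and yx: "E y x"
    and s: "0 < s" "s \<le> d" "m \<le> s" "m < d"
  shows "c = x \<or> E c x"
proof (cases "s = d")
  case True
  then show ?thesis
    using near_star_Inl J s d_pos by simp
next
  case False
  then have sd: "s < d"
    using s by simp
  have yx': "y \<noteq> x"
    using E_neq yx by blast
  have "sub_pt d y x s \<noteq> Inl c"
    using sub_pt_interior_not_Inl[OF s(1) sd] .
  then consider b i where "E c b" "i < d" "sub_pt d y x s = sub_pt d c b i"
    | a b i where "E c a" "E a b" "i < m" "sub_pt d y x s = sub_pt d a b i"
    using J unfolding near_star_def in_star_def by blast
  then show ?thesis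
  proof cases
    case (1 b i)
    have "i \<noteq> 0"
      using 1(3) sub_pt_interior_not_Inl[OF s(1) sd] by (metis sub_pt_0)
    then have "(c = y \<and> b = x) \<or> (c = x \<and> b = y)"
      using sub_pt_eq_interior_iff[of c b y x i d s] 1 E_neq[OF 1(1)] yx' s sd by auto
    then show ?thesis
      using yx by auto
  next
    case (2 a b i)
    have "i \<noteq> 0"
      using 2(4) sub_pt_interior_not_Inl[OF s(1) sd] by (metis sub_pt_0)
    then have "(a = y \<and> b = x \<and> i = s) \<or> (a = x \<and> b = y)"
      using sub_pt_eq_interior_iff[of a b y x i d s] 2 E_neq[OF 2(2)] yx' s sd by auto
    then show ?thesis
      using 2 s by auto
  qed
qed

lemma near_star_Suc_from_Inl:
  assumes ac: "a = c \<or> (E c a \<and> 0 < m)" and e: "E' (Inl a) P'"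
  shows "near_star (Suc m) c P'"
proof -
  obtain z where z: "E a z" "P' = sub_pt d a z 1"
    using e by (rule subdiv_E_Inl_neighbours)
  show ?thesis
  proof (cases "a = c")
    case True
    show ?thesis
    proof (cases "1 < d")
      case False
      then have "P' = sub_pt d z c 0"
        using z True d_pos by simp
      then show ?thesis
        using z E_sym[OF z(1)] True unfolding near_star_def by blast
    qed (use z True in \<open>auto simp: near_star_def in_star_def\<close>)
  next
    case False
    then show ?thesis
      using z ac unfolding near_star_def by fastforce
  qed
qed

lemma near_star_Suc_from_interior:
  assumes ab: "E a b" and s: "0 < s" "s < d" and ac: "a = c \<or> (E c a \<and> s < m)"
    and e: "E' (sub_pt d a b s) P'"
  shows "near_star (Suc m) c P'"
  using subdiv_E_interior_neighbours[OF ab s e]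
proof
  assume "P' = sub_pt d a b (s - 1)"
  then show ?thesis
    using ab s ac unfolding near_star_def in_star_def
    by (metis less_imp_diff_less less_SucI)
next
  assume P': "P' = sub_pt d a b (Suc s)"
  show ?thesis
  proof (cases "a = c \<and> Suc s = d")
    case True
    then have "P' = sub_pt d b a 0"
      using P' by simp
    then show ?thesis
      using True ab E_sym[OF ab] unfolding near_star_def by blast
  next
    case False
    then show ?thesis
      using P' ab s ac unfolding near_star_def in_star_def
      by (metis Suc_lessI Suc_mono)
  qed
qed

lemma near_star_Suc:
  assumes J: "near_star m c P" and md: "m < d" and mv: "P = P' \<or> E' P P'"
  shows "near_star (Suc m) c P'"
proof (cases "P = P'")
  case True
  then show ?thesis
    using J unfolding near_star_def by (metis less_SucI)
next
  case False
  then have e: "E' P P'"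
    using mv by blast
  consider "P = Inl c"
    | b s where "E c b" "s < d" "P = sub_pt d c b s"
    | a b s where "E c a" "E a b" "s < m" "P = sub_pt d a b s"
    using J unfolding near_star_def in_star_def by blast
  then show ?thesis
  proof cases
    case 1
    then show ?thesis
      using near_star_Suc_from_Inl e by blast
  next
    case (2 b s)
    then show ?thesis
      using near_star_Suc_from_Inl near_star_Suc_from_interior e
      by (metis gr0I sub_pt_0)
  next
    case (3 a b s)
    then show ?thesis
      using near_star_Suc_from_Inl near_star_Suc_from_interior[of a b s c m] e md
      by (metis gr0I order.strict_trans sub_pt_0)
  qed
qed

lemma near_star_d: "near_star d c P \<Longrightarrow> \<exists>c'. (c = c' \<or> E c c') \<and> in_star c' P"
  unfolding near_star_def in_star_def by blast

lemma list_near_star_Suc: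
  "list_all2 (near_star m) c C \<Longrightarrow> cop_move E' C C' \<Longrightarrow> m < d \<Longrightarrow> list_all2 (near_star (Suc m)) c C'"
  unfolding cop_move_def by (rule list_all2_trans[of "near_star m"]) (auto intro: near_star_Suc)

lemma list_near_star_d:
  "list_all2 (near_star d) c C \<Longrightarrow> \<exists>c'. cop_move E c c' \<and> list_all2 in_star c' C"
proof (induction c C rule: list_all2_induct)
  case (Cons a c P C)
  obtain c' where "cop_move E c c'" "list_all2 in_star c' C"
    using Cons by blast
  moreover obtain a' where "a = a' \<or> E a a'" "in_star a' P"
    using near_star_d[OF Cons(1)] by blast
  ultimately show ?case
    by (intro exI[of _ "a' # c'"]) (auto simp: cop_move_def)
qed (simp add: cop_move_def)

text \<open>\<open>tracks j c x C R\<close>: the robber of the subdivision at \<open>R\<close> has walked \<open>Suc j\<close> steps along an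
  edge into \<open>x\<close> (or waits at \<open>x\<close>), which the robber of \<open>G\<close> has already reached; the cops of
  \<open>G\<close> at \<open>c\<close> are still to move and shadow the cops of the subdivision at \<open>C\<close>.\<close>

definition tracks :: "nat \<Rightarrow> 'a list \<Rightarrow> 'a \<Rightarrow> 'a subdiv_vertex list \<Rightarrow> 'a subdiv_vertex \<Rightarrow> bool" where
  "tracks j c x C R \<longleftrightarrow> j < d \<and> (R = Inl x \<or> (\<exists>y. E y x \<and> R = sub_pt d y x (Suc j)))
     \<and> list_all2 (near_star j) c C"

lemma tracks_capture:
  assumes C: "list_all2 (near_star m) c C" and R: "R \<in> set C" and m: "m \<le> Suc j" "m < d"
    and j: "j < d" and Rx: "R = Inl x \<or> (\<exists>y. E y x \<and> R = sub_pt d y x (Suc j))"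
  shows "cops_win E c x"
proof -
  obtain a where a: "a \<in> set c" "near_star m a R"
    using list_all2_set2_ex[OF C R] by blast
  have "a = x \<or> E a x"
    using Rx
  proof
    assume "\<exists>y. E y x \<and> R = sub_pt d y x (Suc j)"
    then obtain y where yx: "E y x" and "R = sub_pt d y x (Suc j)"
      by blast
    then have "near_star m a (sub_pt d y x (Suc j))"
      using a(2) by blast
    then show ?thesis
      by (rule near_star_sub_pt[OF _ yx]) (use m j in auto)
  qed (use near_star_Inl a(2) m in blast)
  then show ?thesis
    by (rule cops_win_adjacent[OF a(1)])
qed

lemma tracks_advance:
  assumes tr: "tracks j c x C R" and C': "cop_move E' C C'" and j: "Suc j < d"
  obtains R' where "robber_move E' R R'" "tracks (Suc j) c x C' R'"
proof -
  have C'_near: "list_all2 (near_star (Suc j)) c C'"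
    using tr C' j list_near_star_Suc[of j c C C'] unfolding tracks_def by simp
  consider "R = Inl x" | y where "E y x" "R = sub_pt d y x (Suc j)"
    using tr unfolding tracks_def by blast
  then show thesis
  proof cases
    case 1
    then show thesis
      using that[of R] C'_near j by (simp add: robber_move_def tracks_def)
  next
    case (2 y)
    then show thesis
      using that[of "sub_pt d y x (Suc (Suc j))"] C'_near j subdiv_E_sub_pt[OF 2(1) j]
      by (auto simp: robber_move_def tracks_def)
  qed
qed

lemma tracks_arrival:
  assumes tr: "tracks j c x C R" and C': "cop_move E' C C'" and j: "Suc j = d"
  obtains c' where "cop_move E c c'" "R \<in> set C' \<Longrightarrow> x \<in> set c'"
    "\<And>x'. robber_move E x x' \<Longrightarrow> \<exists>R'. robber_move E' R R' \<and> tracks 0 c' x' C' R'"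
proof -
  have R: "R = Inl x"
    using tr j d_pos unfolding tracks_def by auto
  have "list_all2 (near_star d) c C'"
    using list_near_star_Suc[of j c C C'] tr C' j unfolding tracks_def by simp
  then obtain c' where c': "cop_move E c c'" "list_all2 in_star c' C'"
    using list_near_star_d by blast
  have near0: "list_all2 (near_star 0) c' C'"
    using c'(2) by (rule list_all2_mono) (rule in_star_imp_near_star)
  show thesis
  proof (rule that[OF c'(1)])
    assume "R \<in> set C'"
    then show "x \<in> set c'"
      using list_all2_set2_ex[OF c'(2)] R in_star_Inl by blast
  next
    fix x' assume "robber_move E x x'"
    then consider "x' = x" | "E x x'"
      by (auto simp: robber_move_def)
    then show "\<exists>R'. robber_move E' R R' \<and> tracks 0 c' x' C' R'"
    proof cases
      case 1
      then show ?thesis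
        using R near0 d_pos by (auto simp: robber_move_def tracks_def)
    next
      case 2
      then show ?thesis
        using R near0 d_pos subdiv_E_sub_pt[OF 2, of 0]
        by (intro exI[of _ "sub_pt d x x' 1"]) (auto simp: robber_move_def tracks_def)
    qed
  qed
qed

lemma cops_win_of_subdiv:
  "cops_win E' C R \<Longrightarrow> tracks j c x C R \<Longrightarrow> cops_win E c x"
proof (induction arbitrary: j c x rule: cops_win.induct)
  case (caught R C)
  then show ?case
    using tracks_capture[of j c C R j x] unfolding tracks_def by auto
next
  case (step C C' R)
  consider "Suc j < d" | "Suc j = d"
    using step.prems unfolding tracks_def by linarith
  then show ?case
  proof cases
    case 1
    show ?thesis
    proof (cases "R \<in> set C'")
      case True
      then show ?thesis
        using tracks_capture[of "Suc j" c C' R j x] list_near_star_Suc step.hyps(1) step.prems 1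
        unfolding tracks_def by auto
    next
      case False
      obtain R' where "robber_move E' R R'" "tracks (Suc j) c x C' R'"
        using tracks_advance[OF step.prems step.hyps(1) 1] .
      then show ?thesis
        using step.IH False by blast
    qed
  next
    case 2
    obtain c' where c': "cop_move E c c'" "R \<in> set C' \<Longrightarrow> x \<in> set c'"
      "\<And>x'. robber_move E x x' \<Longrightarrow> \<exists>R'. robber_move E' R R' \<and> tracks 0 c' x' C' R'"
      by (rule tracks_arrival[OF step.prems step.hyps(1) 2]) blast+
    show ?thesis
    proof (rule cops_win.step[OF c'(1)])
      show "x \<in> set c' \<or> (\<forall>x'. robber_move E x x' \<longrightarrow> cops_win E c' x')"
        using c'(2,3) step.IH by blast
    qed
  qed
qed

lemma subdiv_V_in_star:
  assumes "P \<in> subdiv_V V E d"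
  shows "\<exists>c\<in>V. in_star c P"
  using assms
proof (cases rule: subdiv_V_cases)
  case (2 a b i)
  then show ?thesis
    using E_in_V unfolding in_star_def by blast
qed (auto simp: in_star_def)

lemma k_cops_win_of_subdiv:
  assumes "k_cops_win (subdiv_V V E d) E' k"
  shows "k_cops_win V E k"
proof -
  obtain C where C: "length C = k" "set C \<subseteq> subdiv_V V E d" "\<forall>R\<in>subdiv_V V E d. cops_win E' C R"
    using assms unfolding k_cops_win_def by blast
  have "\<forall>P\<in>set C. \<exists>c. c \<in> V \<and> in_star c P"
    using subdiv_V_in_star C(2) by blast
  then obtain c where c: "list_all2 (\<lambda>c P. c \<in> V \<and> in_star c P) c C"
    using list_all2_choice[of C "\<lambda>c P. c \<in> V \<and> in_star c P"] by blast
  show ?thesis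
    unfolding k_cops_win_def
  proof (intro exI[of _ c] conjI ballI)
    show "length c = k"
      using c C(1) by (simp add: list_all2_lengthD)
    show "set c \<subseteq> V"
      using c by (induction c C rule: list_all2_induct) auto
    fix x assume "x \<in> V"
    then have "cops_win E' C (Inl x)"
      using C(3) by (simp add: subdiv_V_def)
    moreover have "tracks (d - 1) c x C (Inl x)"
      using c d_pos unfolding tracks_def
      by (auto elim: list_all2_mono intro: in_star_imp_near_star)
    ultimately show "cops_win E c x"
      by (rule cops_win_of_subdiv)
  qed
qed

section \<open>Upper bound\<close>

text \<open>Positions of cops imitating a move from \<open>c\<close> to \<open>c'\<close> on \<open>G\<close>, after \<open>j\<close> of the \<open>d\<close> rounds.\<close>

definition shadow_pos :: "'a \<Rightarrow> 'a \<Rightarrow> nat \<Rightarrow> 'a subdiv_vertex" where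
  "shadow_pos a b j = (if a = b then Inl a else sub_pt d a b j)"

definition shadows :: "'a list \<Rightarrow> 'a list \<Rightarrow> nat \<Rightarrow> 'a subdiv_vertex list" where
  "shadows c c' j = map2 (\<lambda>a b. shadow_pos a b j) c c'"

lemma shadows_0: "length c = length c' \<Longrightarrow> shadows c c' 0 = map Inl c"
  by (induction c c' rule: list_induct2) (auto simp: shadows_def shadow_pos_def)

lemma shadows_d: "length c = length c' \<Longrightarrow> shadows c c' d = map Inl c'"
proof (induction c c' rule: list_induct2)
qed (use d_pos in \<open>auto simp: shadows_def shadow_pos_def\<close>)

lemma shadows_same: "shadows c c j = map Inl c"
  by (induction c) (auto simp: shadows_def shadow_pos_def)

lemma cop_move_shadows:
  "cop_move E c c' \<Longrightarrow> j < d \<Longrightarrow> cop_move E' (shadows c c' j) (shadows c c' (Suc j))"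
  unfolding cop_move_def shadows_def
proof (induction c c' rule: list_all2_induct)
  case (Cons a c b c')
  have "shadow_pos a b j = shadow_pos a b (Suc j) \<or> E' (shadow_pos a b j) (shadow_pos a b (Suc j))"
    using Cons(1,4) subdiv_E_sub_pt[of a b j] by (auto simp: shadow_pos_def)
  then show ?case
    using Cons by simp
qed simp

end

locale shadow_strategy = subdivision +
  fixes k :: nat
  assumes cops_win_G: "length c = k \<Longrightarrow> set c \<subseteq> V \<Longrightarrow> x \<in> V \<Longrightarrow> cops_win E c x"
begin

text \<open>The chaser stands at the start of a non-backtracking walk of length \<open>g\<close> to the robber,
  while the other \<open>k\<close> cops are imitating a move of \<open>G\<close>.\<close>

definition chaser_wins :: "nat \<Rightarrow> bool" where
  "chaser_wins g \<longleftrightarrow> (\<forall>t c c' j. nb_walk E' t \<and> length t = Suc g \<and> cop_move E c c' \<and> set c \<subseteq> V \<and>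
      length c = k \<and> j \<le> d \<longrightarrow> cops_win E' (hd t # shadows c c' j) (last t))"

text \<open>The robber has just stepped from \<open>y\<close> onto the edge towards \<open>x\<close>, the imitating cops stand
  at \<open>c\<close>.\<close>

definition wins_on_entry :: "nat \<Rightarrow> 'a list \<Rightarrow> 'a \<Rightarrow> bool" where
  "wins_on_entry g c x \<longleftrightarrow> (\<forall>y t. E y x \<and> nb_walk E' t \<and> length t = Suc g \<and> 2 \<le> length t \<and>
      last (butlast t) = Inl y \<and> last t = sub_pt d y x 1 \<and> set c \<subseteq> V \<and> length c = k
      \<longrightarrow> cops_win E' (hd t # map Inl c) (last t))"

lemma wins_on_entryD:
  assumes "wins_on_entry g c x" "E y x" "nb_walk E' t" "length t = Suc g" "2 \<le> length t"
    "last (butlast t) = Inl y" "last t = sub_pt d y x 1" "set c \<subseteq> V" "length c = k"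
  shows "cops_win E' (hd t # map Inl c) (last t)"
  using assms unfolding wins_on_entry_def by blast

lemma chaser_wins_shorter:
  assumes IH: "\<forall>g'<g. chaser_wins g'" and t': "nb_walk E' t'" "t' \<noteq> []" "length t' < Suc g"
    and c: "cop_move E c c'" "set c \<subseteq> V" "length c = k" and j: "j \<le> d"
  shows "cops_win E' (hd t' # shadows c c' j) (last t')"
proof -
  have "length t' = Suc (length t' - 1)" "length t' - 1 < g"
    using t'(2,3) by (cases t'; auto)+
  then show ?thesis
    using IH t'(1) c j unfolding chaser_wins_def by metis
qed

lemma robber_enters_edge:
  assumes entry: "\<forall>z. E x z \<longrightarrow> wins_on_entry g c z" and e: "E' (Inl x) r"
    and walk: "nb_walk E' (tl t @ [r])" "length t = Suc g" "2 \<le> length t" "last t = Inl x"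
    and c: "set c \<subseteq> V" "length c = k"
  shows "cops_win E' (hd (tl t) # map Inl c) r"
proof -
  obtain z where z: "E x z" "r = sub_pt d x z 1"
    using e by (rule subdiv_E_Inl_neighbours)
  note shift = tl_snoc_simps[OF walk(3), of r]
  have "cops_win E' (hd (tl t @ [r]) # map Inl c) (last (tl t @ [r]))"
    by (rule wins_on_entryD[of g c z x]) (use entry z walk shift c in auto)
  then show ?thesis
    using shift by simp
qed

text \<open>While the robber walks along an edge in step with the imitating cops, he either turns back
  (and the chaser gains), or he arrives at \<open>x\<close> together with the imitating cops.\<close>

lemma shadows_follow_robber:
  assumes IH: "\<forall>g'<g. chaser_wins g'" and c: "cop_move E c c'" "set c \<subseteq> V" "length c = k"
    and next_round: "x \<in> set c' \<or> (\<forall>z. E x z \<longrightarrow> wins_on_entry g c' z)"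
  shows "j < d \<Longrightarrow> E y x \<Longrightarrow> nb_walk E' t \<Longrightarrow> length t = Suc g \<Longrightarrow> 2 \<le> length t \<Longrightarrow>
    last (butlast t) = sub_pt d y x j \<Longrightarrow> last t = sub_pt d y x (Suc j) \<Longrightarrow>
    cops_win E' (hd t # shadows c c' j) (last t)"
proof (induction "d - j" arbitrary: j t rule: less_induct)
  case less
  have lc: "length c = length c'"
    using cop_move_length[OF c(1)] .
  have c'V: "set c' \<subseteq> V"
    using cop_move_in_V[OF graph c(1,2)] .
  show ?case
  proof (rule cops_win_chase[OF less.prems(3,5) cop_move_shadows[OF c(1) less.prems(1)]])
    fix t' assume "nb_walk E' t'" "t' \<noteq> []" "length t' < length t"
    then show "cops_win E' (hd t' # shadows c c' (Suc j)) (last t')"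
      using chaser_wins_shorter[OF IH, of t' c c' "Suc j"] less.prems c by simp
  next
    fix r' assume e: "E' (last t) r'" and not_back: "r' \<noteq> last (butlast t)"
      and not_caught: "last t \<notin> set (shadows c c' (Suc j))" and walk: "nb_walk E' (tl t @ [r'])"
    note shift = tl_snoc_simps[OF less.prems(5), of r']
    show "cops_win E' (hd (tl t) # shadows c c' (Suc j)) r'"
    proof (cases "Suc j < d")
      case True
      have "r' = sub_pt d y x (Suc j - 1) \<or> r' = sub_pt d y x (Suc (Suc j))"
        using subdiv_E_interior_neighbours[OF less.prems(2), of "Suc j" r'] True e less.prems by simp
      then have "r' = sub_pt d y x (Suc (Suc j))"
        using not_back less.prems by auto
      then have "cops_win E' (hd (tl t @ [r']) # shadows c c' (Suc j)) (last (tl t @ [r']))"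
        by (intro less.hyps[of "Suc j"]) (use True less.prems walk shift in auto)
      then show ?thesis
        using shift by simp
    next
      case False
      then have "Suc j = d"
        using less.prems by simp
      then have lt: "last t = Inl x" and sh: "shadows c c' (Suc j) = map Inl c'"
        using less.prems shadows_d[OF lc] d_pos by auto
      have "x \<notin> set c'"
        using not_caught lt sh by auto
      then have "\<forall>z. E x z \<longrightarrow> wins_on_entry g c' z"
        using next_round by blast
      then show ?thesis
        using robber_enters_edge[OF _ e[unfolded lt] walk] shift lt less.prems c'V lc c(3) sh
        by simp
    qed
  qed
qed

lemma wins_on_entry_if_next_round:
  assumes IH: "\<forall>g'<g. chaser_wins g'" and c: "cop_move E c c'"
    and next_round: "x \<in> set c' \<or> (\<forall>z. E x z \<longrightarrow> wins_on_entry g c' z)"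
  shows "wins_on_entry g c x"
  unfolding wins_on_entry_def
proof (intro allI impI)
  fix y t assume h: "E y x \<and> nb_walk E' t \<and> length t = Suc g \<and> 2 \<le> length t \<and>
    last (butlast t) = Inl y \<and> last t = sub_pt d y x 1 \<and> set c \<subseteq> V \<and> length c = k"
  then have "cops_win E' (hd t # shadows c c' 0) (last t)"
    using shadows_follow_robber[OF IH c _ _ next_round] d_pos by auto
  then show "cops_win E' (hd t # map Inl c) (last t)"
    using shadows_0[OF cop_move_length[OF c]] by simp
qed

lemma cops_win_imp_wins_on_entry:
  assumes IH: "\<forall>g'<g. chaser_wins g'"
  shows "cops_win E c x \<Longrightarrow> wins_on_entry g c x"
proof (induction rule: cops_win.induct)
  case (caught r cs)
  then show ?case
    using wins_on_entry_if_next_round[OF IH cop_move_refl] by blast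
next
  case (step cs cs' r)
  then show ?case
    using wins_on_entry_if_next_round[OF IH] by (auto simp: robber_move_def)
qed

lemma standing_shadows_win:
  assumes IH: "\<forall>g'<g. chaser_wins g'" and c: "set c \<subseteq> V" "length c = k"
    and t: "nb_walk E' t" "length t = Suc g" "2 \<le> length t"
  shows "cops_win E' (hd t # map Inl c) (last t)"
proof -
  obtain y x i where walk: "E y x" "i < d" "last (butlast t) = sub_pt d y x i"
    "last t = sub_pt d y x (Suc i)"
    using nb_walk_last_edge[OF t(1,3)] by (rule subdiv_E_cases)
  have "\<forall>z. E x z \<longrightarrow> wins_on_entry g c z"
    using cops_win_G[OF c(2,1)] E_in_V cops_win_imp_wins_on_entry[OF IH] by blast
  then have "cops_win E' (hd t # shadows c c i) (last t)"
    using shadows_follow_robber[OF IH cop_move_refl c] walk t by blast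
  then show ?thesis
    by (simp add: shadows_same)
qed

lemma moving_shadows_win:
  assumes IH: "\<forall>g'<g. chaser_wins g'" and c: "cop_move E c c'" "set c \<subseteq> V" "length c = k"
  shows "j \<le> d \<Longrightarrow> nb_walk E' t \<Longrightarrow> length t = Suc g \<Longrightarrow> cops_win E' (hd t # shadows c c' j) (last t)"
proof (induction "d - j" arbitrary: j t rule: less_induct)
  case less
  have lc: "length c = length c'"
    using cop_move_length[OF c(1)] .
  show ?case
  proof (cases "length t = 1")
    case True
    then have "last t = hd t"
      by (cases t) auto
    then show ?thesis
      by (simp add: cops_win.caught)
  next
    case False
    then have t2: "2 \<le> length t"
      using less.prems by simp
    show ?thesis
    proof (cases "j = d")
      case True
      have "cops_win E' (hd t # map Inl c') (last t)"
        using standing_shadows_win[OF IH cop_move_in_V[OF graph c(1,2)]] less.prems t2 lc c(3)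
        by simp
      then show ?thesis
        using shadows_d[OF lc] True by simp
    next
      case False
      then have jd: "j < d"
        using less.prems by simp
      show ?thesis
      proof (rule cops_win_chase[OF less.prems(2) t2 cop_move_shadows[OF c(1) jd]])
        fix t' assume "nb_walk E' t'" "t' \<noteq> []" "length t' < length t"
        then show "cops_win E' (hd t' # shadows c c' (Suc j)) (last t')"
          using chaser_wins_shorter[OF IH, of t' c c' "Suc j"] less.prems c jd by simp
      next
        fix r' assume "nb_walk E' (tl t @ [r'])"
        moreover note shift = tl_snoc_simps[OF t2, of r']
        ultimately have "cops_win E' (hd (tl t @ [r']) # shadows c c' (Suc j)) (last (tl t @ [r']))"
          by (intro less.hyps[of "Suc j"]) (use jd less.prems in auto)
        then show "cops_win E' (hd (tl t) # shadows c c' (Suc j)) r'"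
          using shift by simp
      qed
    qed
  qed
qed

lemma chaser_wins_step: "\<forall>g'<g. chaser_wins g' \<Longrightarrow> chaser_wins g"
  unfolding chaser_wins_def[of g] using moving_shadows_win by blast

lemma chaser_wins: "chaser_wins g"
  by (induction g rule: less_induct) (use chaser_wins_step in blast)

lemma cops_win_subdiv:
  assumes conn: "connected_graph V E" and v: "v \<in> V" and R: "R \<in> subdiv_V V E d"
  shows "cops_win E' (Inl v # map Inl (replicate k v)) R"
proof -
  obtain t where t: "nb_walk E' t" "t \<noteq> []" "hd t = Inl v" "last t = R"
    using rtranclp_imp_nb_walk[OF subdiv_reachable[OF conn v R]] by blast
  have "length t = Suc (length t - 1)"
    using t(2) by (cases t) auto
  moreover have "set (replicate k v) \<subseteq> V"
    using v by (cases k) auto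
  ultimately have "cops_win E' (hd t # shadows (replicate k v) (replicate k v) d) (last t)"
    using chaser_wins[of "length t - 1"] t(1) cop_move_refl[of E "replicate k v"]
    unfolding chaser_wins_def by (metis le_refl length_replicate)
  then show ?thesis
    using t by (simp add: shadows_same)
qed

end

lemma (in subdivision) k_cops_win_subdiv_Suc:
  assumes conn: "connected_graph V E" and win: "k_cops_win V E k"
  shows "k_cops_win (subdiv_V V E d) E' (Suc k)"
proof -
  interpret shadow_strategy V E d k
    using k_cops_win_imp_cops_win[OF graph conn win] by unfold_locales
  obtain v where v: "v \<in> V"
    using conn unfolding connected_graph_def by blast
  show ?thesis
    unfolding k_cops_win_def
    by (intro exI[of _ "Inl v # map Inl (replicate k v)"])
      (use v cops_win_subdiv[OF conn v] in \<open>auto simp: subdiv_V_def\<close>)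
qed

theorem lemma17:
  fixes V :: "'a::linorder set" and E :: "'a \<Rightarrow> 'a \<Rightarrow> bool" and d :: nat
  assumes "graph V E" and "connected_graph V E" and "d \<ge> 1"
  shows "cop_number V E \<le> cop_number (subdiv_V V E d) (subdiv_E E d)
       \<and> cop_number (subdiv_V V E d) (subdiv_E E d) \<le> cop_number V E + 1"
proof -
  interpret subdivision V E d
    using assms(1,3) by unfold_locales
  obtain k where "k_cops_win V E k"
    using k_cops_win_exists assms(1) unfolding graph_def by blast
  then have win: "k_cops_win V E (cop_number V E)"
    by (rule k_cops_win_cop_number)
  then have win_subdiv: "k_cops_win (subdiv_V V E d) E' (Suc (cop_number V E))"
    using k_cops_win_subdiv_Suc assms(2) by blast
  then have "k_cops_win V E (cop_number (subdiv_V V E d) E')"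
    using k_cops_win_cop_number k_cops_win_of_subdiv by blast
  with win_subdiv show ?thesis
    using cop_number_le by (metis Suc_eq_plus1)
qed

end
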